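(* There exist maps $f_r$ and $f_c$, where $f_r$ assigns to each $n\times n$ matrix $R$ with entries in $[0,1]$ a mixed strategy (probability distribution over rows) and $f_c$ assigns to each $n\times n$ matrix $C$ with entries in $[0,1]$ a mixed strategy (probability distribution over columns), such that for every $n$ and every bimatrix game $(R,C)$ with $R,C\in[0,1]^{n\times n}$, the profile $(f_r(R),f_c(C))$ is a $\frac{3}{4}$-approximate Nash equilibrium of $(R,C)$. (That is, a $\frac34$-approximate Nash equilibrium can be guaranteed even with no communication between the players.)
   Context: A bimatrix game $(R,C)$ consists of two $n\times n$ payoff matrices: $R$ for the row player, $C$ for the column player, with entries in $[0,1]$. Mixed strategies are probability vectors $\mathbf{x}$ (over rows) and $\mathbf{y}$ (over columns); payoffs are $\mathbf{x}^T R\mathbf{y}$ and $\mathbf{x}^T C\mathbf{y}$. Writing $\mathbf{e}_i$ for the $i$-th unit vector, $(\mathbf{x},\mathbf{y})$ is an $\epsilon$-approximate Nash equilibrium if for all $i$: $\mathbf{e}_i^T R\mathbf{y}\le \mathbf{x}^T R\mathbf{y}+\epsilon$ and $\mathbf{x}^T C\mathbf{e}_i\le \mathbf{x}^T C\mathbf{y}+\epsilon$. *)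

theory Defs
  imports Complex_Main
begin

text \<open>An n x n matrix is represented as a function nat => nat => real, only the
entries with indices < n being relevant; a mixed strategy over n pure strategies is
a function nat => real, only entries with index < n being relevant.\<close>

definition unit_matrix :: "nat \<Rightarrow> (nat \<Rightarrow> nat \<Rightarrow> real) \<Rightarrow> bool" where
  "unit_matrix n A \<longleftrightarrow> (\<forall>i<n. \<forall>j<n. 0 \<le> A i j \<and> A i j \<le> 1)"

definition mixed_strategy :: "nat \<Rightarrow> (nat \<Rightarrow> real) \<Rightarrow> bool" where
  "mixed_strategy n x \<longleftrightarrow> (\<forall>i<n. 0 \<le> x i) \<and> (\<Sum>i<n. x i) = 1"

definition payoff :: "nat \<Rightarrow> (nat \<Rightarrow> nat \<Rightarrow> real) \<Rightarrow> (nat \<Rightarrow> real) \<Rightarrow> (nat \<Rightarrow> real) \<Rightarrow> real" where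
  "payoff n A x y = (\<Sum>i<n. \<Sum>j<n. x i * A i j * y j)"

definition unit_vec :: "nat \<Rightarrow> nat \<Rightarrow> real" where
  "unit_vec k = (\<lambda>i. if i = k then 1 else 0)"

definition approx_nash ::
  "nat \<Rightarrow> (nat \<Rightarrow> nat \<Rightarrow> real) \<Rightarrow> (nat \<Rightarrow> nat \<Rightarrow> real) \<Rightarrow> (nat \<Rightarrow> real) \<Rightarrow> (nat \<Rightarrow> real) \<Rightarrow> real \<Rightarrow> bool" where
  "approx_nash n R C x y \<epsilon> \<longleftrightarrow>
     (\<forall>i<n. payoff n R (unit_vec i) y \<le> payoff n R x y + \<epsilon> \<and>
            payoff n C x (unit_vec i) \<le> payoff n C x y + \<epsilon>)"

end

theory Submission
  imports Defs
begin

text \<open>The row player mixes, with weight 1/2 each, the fixed row 0 and a best response a to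
column 0; symmetrically the column player mixes column 0 with a best response to row 0.
Against such a column strategy every pure row earns at most (R a 0 + 1)/2, while the profile
earns the row player at least R a 0 / 4, because row a meets column 0 with probability 1/4.
The regret is therefore at most (R a 0 + 1)/2 - R a 0 / 4 \<le> 3/4. The column player's
situation is the row player's one in the transposed game.\<close>

lemma arg_max_on_if_finite:
  fixes f :: "'a \<Rightarrow> 'b::linorder"
  assumes "finite S" "S \<noteq> {}"
  shows "arg_max_on f S \<in> S" and "\<forall>x\<in>S. f x \<le> f (arg_max_on f S)"
proof -
  have "Max (f ` S) \<in> f ` S"
    using assms by simp
  then obtain m where "m \<in> S" "f m = Max (f ` S)"
    by auto
  then have "is_arg_max f (\<lambda>x. x \<in> S) m"
    using assms by (simp add: is_arg_max_linorder)
  then have "is_arg_max f (\<lambda>x. x \<in> S) (arg_max_on f S)"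
    unfolding arg_max_on_def arg_max_def by (rule someI)
  then show "arg_max_on f S \<in> S" and "\<forall>x\<in>S. f x \<le> f (arg_max_on f S)"
    by (auto simp: is_arg_max_linorder)
qed

definition half_mix :: "nat \<Rightarrow> nat \<Rightarrow> nat \<Rightarrow> real" where
  "half_mix a b = (\<lambda>i. (unit_vec a i + unit_vec b i) / 2)"

lemma mixed_strategy_half_mix:
  assumes "a < n" "b < n"
  shows "mixed_strategy n (half_mix a b)"
  using assms by (simp add: mixed_strategy_def half_mix_def unit_vec_def add_divide_distrib sum.distrib
      flip: sum_divide_distrib)

lemma payoff_half_mix_left:
  "payoff n A (half_mix a b) y = (payoff n A (unit_vec a) y + payoff n A (unit_vec b) y) / 2"
  by (simp add: payoff_def half_mix_def add_divide_distrib ring_distribs sum.distrib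
      flip: sum_divide_distrib)

lemma payoff_half_mix_right:
  "payoff n A x (half_mix a b) = (payoff n A x (unit_vec a) + payoff n A x (unit_vec b)) / 2"
  by (simp add: payoff_def half_mix_def add_divide_distrib ring_distribs sum.distrib
      flip: sum_divide_distrib)

lemma sum_mult_unit_vec:
  assumes "j < n"
  shows "(\<Sum>l<n. f l * unit_vec j l) = f j"
proof -
  have "(\<Sum>l<n. f l * unit_vec j l) = (\<Sum>l<n. if l = j then f j else 0)"
    unfolding unit_vec_def by (intro sum.cong) auto
  then show ?thesis
    using assms by simp
qed

lemma payoff_unit_vec:
  assumes "i < n" "j < n"
  shows "payoff n A (unit_vec i) (unit_vec j) = A i j"
proof -
  have "payoff n A (unit_vec i) (unit_vec j) = (\<Sum>k<n. (\<Sum>l<n. A k l * unit_vec j l) * unit_vec i k)"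
    unfolding payoff_def by (simp add: sum_distrib_left sum_distrib_right mult_ac)
  also have "\<dots> = A i j"
    using assms by (simp add: sum_mult_unit_vec)
  finally show ?thesis .
qed

definition half_best_response :: "nat \<Rightarrow> (nat \<Rightarrow> nat \<Rightarrow> real) \<Rightarrow> nat \<Rightarrow> real" where
  "half_best_response n A = half_mix 0 (arg_max_on (\<lambda>i. A i 0) {..<n})"

lemma mixed_strategy_half_best_response:
  assumes "0 < n"
  shows "mixed_strategy n (half_best_response n A)"
  unfolding half_best_response_def
  using assms arg_max_on_if_finite(1)[of "{..<n}"] by (intro mixed_strategy_half_mix) auto

lemma payoff_transpose: "payoff n (\<lambda>i j. A j i) y x = payoff n A x y"
  unfolding payoff_def by (subst sum.swap) (simp add: mult_ac)

lemma regret_half_best_response: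
  assumes R: "unit_matrix n R" and "b < n" "i < n"
  shows "payoff n R (unit_vec i) (half_mix 0 b)
           \<le> payoff n R (half_best_response n R) (half_mix 0 b) + 3/4"
proof -
  define a where "a = arg_max_on (\<lambda>i. R i 0) {..<n}"
  have "0 < n" using \<open>i < n\<close> by simp
  then have "a < n" and "R i 0 \<le> R a 0"
    using arg_max_on_if_finite[of "{..<n}" "\<lambda>i. R i 0"] \<open>i < n\<close> unfolding a_def by auto
  have entries: "0 \<le> R k l \<and> R k l \<le> 1" if "k < n" "l < n" for k l
    using R that unfolding unit_matrix_def by blast
  have "payoff n R (unit_vec i) (half_mix 0 b) = (R i 0 + R i b) / 2"
    using \<open>0 < n\<close> \<open>b < n\<close> \<open>i < n\<close> by (simp add: payoff_half_mix_right payoff_unit_vec)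
  also have "\<dots> \<le> (R a 0 + 1) / 2"
    using \<open>R i 0 \<le> R a 0\<close> entries[OF \<open>i < n\<close> \<open>b < n\<close>] by simp
  also have "\<dots> \<le> (R 0 0 + R 0 b + R a 0 + R a b) / 4 + 3/4"
    using entries[OF \<open>0 < n\<close> \<open>0 < n\<close>] entries[OF \<open>0 < n\<close> \<open>b < n\<close>]
      entries[OF \<open>a < n\<close> \<open>0 < n\<close>] entries[OF \<open>a < n\<close> \<open>b < n\<close>] by (simp add: field_simps)
  also have "(R 0 0 + R 0 b + R a 0 + R a b) / 4 = payoff n R (half_best_response n R) (half_mix 0 b)"
    using \<open>0 < n\<close> \<open>a < n\<close> \<open>b < n\<close>
    by (simp add: half_best_response_def flip: a_def add: payoff_half_mix_left
        payoff_half_mix_right payoff_unit_vec field_simps)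
  finally show ?thesis .
qed

lemma approx_nash_half_best_response:
  assumes "unit_matrix n R" "unit_matrix n C"
  shows "approx_nash n R C (half_best_response n R) (half_best_response n (\<lambda>i j. C j i)) (3/4)"
  unfolding approx_nash_def
proof (intro allI impI conjI)
  fix i assume "i < n"
  define a where "a = arg_max_on (\<lambda>i. R i 0) {..<n}"
  define b where "b = arg_max_on (\<lambda>j. C 0 j) {..<n}"
  have "a < n" "b < n"
    using arg_max_on_if_finite(1)[of "{..<n}"] \<open>i < n\<close> unfolding a_def b_def by auto
  have x: "half_best_response n R = half_mix 0 a" and y: "half_best_response n (\<lambda>i j. C j i) = half_mix 0 b"
    unfolding half_best_response_def a_def b_def by simp_all
  show "payoff n R (unit_vec i) (half_best_response n (\<lambda>i j. C j i))
          \<le> payoff n R (half_best_response n R) (half_best_response n (\<lambda>i j. C j i)) + 3/4"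
    unfolding y using regret_half_best_response[OF assms(1) \<open>b < n\<close> \<open>i < n\<close>] .
  have "unit_matrix n (\<lambda>i j. C j i)"
    using assms(2) unfolding unit_matrix_def by blast
  from regret_half_best_response[OF this \<open>a < n\<close> \<open>i < n\<close>]
  show "payoff n C (half_best_response n R) (unit_vec i)
          \<le> payoff n C (half_best_response n R) (half_best_response n (\<lambda>i j. C j i)) + 3/4"
    unfolding x payoff_transpose[of n "\<lambda>i j. C j i"] .
qed

theorem theorem1:
  shows "\<exists>(f_r :: nat \<Rightarrow> (nat \<Rightarrow> nat \<Rightarrow> real) \<Rightarrow> (nat \<Rightarrow> real))
           (f_c :: nat \<Rightarrow> (nat \<Rightarrow> nat \<Rightarrow> real) \<Rightarrow> (nat \<Rightarrow> real)).
    \<forall>n R C. 1 \<le> n \<and> unit_matrix n R \<and> unit_matrix n C \<longrightarrow>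
      mixed_strategy n (f_r n R) \<and> mixed_strategy n (f_c n C) \<and>
      approx_nash n R C (f_r n R) (f_c n C) (3/4)"
proof (intro exI allI impI)
  fix n R C
  assume "1 \<le> n \<and> unit_matrix n R \<and> unit_matrix n (C :: nat \<Rightarrow> nat \<Rightarrow> real)"
  then show "mixed_strategy n (half_best_response n R)
      \<and> mixed_strategy n (half_best_response n (\<lambda>i j. C j i))
      \<and> approx_nash n R C (half_best_response n R) (half_best_response n (\<lambda>i j. C j i)) (3/4)"
    using mixed_strategy_half_best_response[of n] approx_nash_half_best_response[of n R C]
    by simp
qed

end
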